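(* Let $k>0$ and consider $n$ agents $\mathcal{V}=\{1,\dots,n\}$ with states $q_i\in\mathbb{R}^m$ evolving by $$\ddot q_i=-k\dot q_i-\sum_{j\in\mathcal{N}_i(\sigma(t))}a_{ij}(t)(q_i-q_j)-(q_i-P_{\mathcal{X}_i}(q_i)),$$ where $\mathcal{X}_i\subseteq\mathbb{R}^m$ are closed convex sets, $\sigma$ is a piecewise constant switching signal selecting an undirected graph $\mathcal{G}_{\sigma(t)}$ on $\mathcal{V}$ with neighbor sets $\mathcal{N}_i(\sigma(t))$, and $a_{ij}(t)>0$ are continuous weights. Define $x_i=q_i$ and $x_{n+i}=q_i+\frac{2}{k}\dot q_i$ for $i\in\mathcal{V}$, and $$\delta_i(t)=\frac{4}{k^2}\sum_{j\in\mathcal{N}_i(\sigma(t))}a_{ij}(t)(\dot q_i-\dot q_j)-\frac{2}{k}(q_i-P_{\mathcal{X}_i}(q_i)).$$ Fix a coordinate index $s\in\{1,\dots,m\}$, write $x_i^{(s)}$ for the $s$-th component of $x_i$, and let $\bar{\mathcal{V}}=\{1,\dots,2n\}$, $\hbar(t)=\max_{i\in\bar{\mathcal{V}}}x_i^{(s)}(t)$, $\ell(t)=\min_{i\in\bar{\mathcal{V}}}x_i^{(s)}(t)$. Then for all $t\ge t_0\ge0$, $$D^+\hbar(t)\le\max_{i\in\mathcal{V}}\|\delta_i(t)\|,\qquad D^+\ell(t)\ge-\max_{i\in\mathcal{V}}\|\delta_i(t)\|.$$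
   Context: $D^+f(t)=\limsup_{\tau\to0^+}\frac{f(t+\tau)-f(t)}{\tau}$ is the upper Dini derivative. $P_{\mathcal{X}}(x)$ is the Euclidean projection of $x$ onto the closed convex set $\mathcal{X}$. In the transformed variables the dynamics read $\dot x_i=-\frac k2(x_i-x_{n+i})$ and $\dot x_{n+i}=-\frac k2(x_{n+i}-x_i)-\frac2k\sum_{j\in\mathcal{N}_i(\sigma(t))}a_{ij}(t)(x_{n+i}-x_{n+j})+\delta_i(t)$. *)

theory Defs
  imports "HOL-Analysis.Analysis"
begin

definition Dini_upper :: "(real \<Rightarrow> real) \<Rightarrow> real \<Rightarrow> ereal" where
  "Dini_upper f t = Limsup (at_right 0) (\<lambda>\<tau>. ereal ((f (t + \<tau>) - f t) / \<tau>))"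

definition piecewise_constant :: "(real \<Rightarrow> 'g) \<Rightarrow> bool" where
  "piecewise_constant \<sigma> \<longleftrightarrow>
     (\<forall>a b. finite {t \<in> {a..b}. \<not> (\<exists>e>0. \<forall>u\<in>ball t e. \<sigma> u = \<sigma> t)})"

definition undirected_nbrs :: "nat \<Rightarrow> (nat \<Rightarrow> nat set) \<Rightarrow> bool" where
  "undirected_nbrs n N \<longleftrightarrow>
     (\<forall>i\<in>{1..n}. N i \<subseteq> {1..n} \<and> i \<notin> N i) \<and>
     (\<forall>i\<in>{1..n}. \<forall>j\<in>{1..n}. j \<in> N i \<longleftrightarrow> i \<in> N j)"

definition xvar :: "real \<Rightarrow> nat \<Rightarrow> (nat \<Rightarrow> real \<Rightarrow> real^'m) \<Rightarrow> (nat \<Rightarrow> real \<Rightarrow> real^'m)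
                    \<Rightarrow> nat \<Rightarrow> real \<Rightarrow> real^'m" where
  "xvar k n q q' i t = (if i \<le> n then q i t else q (i - n) t + (2 / k) *\<^sub>R q' (i - n) t)"

definition delta :: "real \<Rightarrow> (real \<Rightarrow> 'g) \<Rightarrow> ('g \<Rightarrow> nat \<Rightarrow> nat set)
     \<Rightarrow> (nat \<Rightarrow> nat \<Rightarrow> real \<Rightarrow> real) \<Rightarrow> (nat \<Rightarrow> (real^'m) set)
     \<Rightarrow> (nat \<Rightarrow> real \<Rightarrow> real^'m) \<Rightarrow> (nat \<Rightarrow> real \<Rightarrow> real^'m) \<Rightarrow> nat \<Rightarrow> real \<Rightarrow> real^'m" where
  "delta k \<sigma> N a X q q' i t =
     (4 / k^2) *\<^sub>R (\<Sum>j\<in>N (\<sigma> t) i. a i j t *\<^sub>R (q' i t - q' j t))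
     - (2 / k) *\<^sub>R (q i t - closest_point (X i) (q i t))"

end

theory Submission imports Defs begin

text \<open>
  For a finite family of right-differentiable functions, indices lying strictly below the
  maximum at time t stay below it for small positive increments, so the upper Dini derivative of
  the maximum is bounded by the right derivatives of the maximising indices. If the maximum of
  the 2n transformed coordinates is attained at x(i) = q(i), then x(n+i) <= x(i) forces the
  rate q'(i) <= 0. If it is attained at x(n+j), then q'(j) >= 0 and every coupling term
  a(j,l) (x(n+j) - x(n+l)) is nonnegative, so the transformed dynamics give
  x'(n+j) <= delta(j). The minimum is the maximum of the negated system.
\<close>

lemma eventually_Max_diff_quotient_less:
  fixes f :: "'i \<Rightarrow> real \<Rightarrow> real"
  assumes fin: "finite I" and ne: "I \<noteq> {}"
    and lim: "\<And>i. i \<in> I \<Longrightarrow> ((\<lambda>\<tau>. (f i (t + \<tau>) - f i t) / \<tau>) \<longlongrightarrow> D i) (at_right 0)"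
    and active: "\<And>i. i \<in> I \<Longrightarrow> f i t = Max ((\<lambda>i. f i t) ` I) \<Longrightarrow> D i < C"
  shows "\<forall>\<^sub>F \<tau> in at_right 0.
           (Max ((\<lambda>i. f i (t + \<tau>)) ` I) - Max ((\<lambda>i. f i t) ` I)) / \<tau> < C"
proof -
  define F where "F = Max ((\<lambda>i. f i t) ` I)"
  have pos: "\<forall>\<^sub>F \<tau> in at_right 0. \<tau> > (0::real)"
    by (simp add: eventually_at_right_less)
  have each: "\<forall>\<^sub>F \<tau> in at_right 0. f i (t + \<tau>) < F + \<tau> * C" if i: "i \<in> I" for i
  proof (cases "f i t = F")
    case True
    have "\<forall>\<^sub>F \<tau> in at_right 0. (f i (t + \<tau>) - f i t) / \<tau> < C"
      using order_tendstoD(2)[OF lim[OF i]] active[OF i] True by (simp add: F_def)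
    with pos show ?thesis
      by eventually_elim (use True in \<open>simp add: divide_less_eq algebra_simps\<close>)
  next
    case False
    have "f i t < F"
      using False fin i by (simp add: F_def order.not_eq_order_implies_strict)
    moreover have "((\<lambda>\<tau>. f i t + \<tau> * ((f i (t + \<tau>) - f i t) / \<tau> - C)) \<longlongrightarrow> f i t + 0 * (D i - C)) (at_right 0)"
      by (intro tendsto_intros lim[OF i])
    ultimately have "\<forall>\<^sub>F \<tau> in at_right 0. f i t + \<tau> * ((f i (t + \<tau>) - f i t) / \<tau> - C) < F"
      by (intro order_tendstoD(2)) auto
    with pos show ?thesis
    proof eventually_elim
      case (elim \<tau>)
      then have "\<tau> * ((f i (t + \<tau>) - f i t) / \<tau> - C) = f i (t + \<tau>) - f i t - \<tau> * C"
        by (simp add: field_simps)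
      with elim show ?case by linarith
    qed
  qed
  have "\<forall>\<^sub>F \<tau> in at_right 0. \<forall>i\<in>I. f i (t + \<tau>) < F + \<tau> * C"
    using fin each by (simp add: eventually_ball_finite)
  with pos show ?thesis
    by eventually_elim (use fin ne in \<open>simp add: F_def divide_less_eq algebra_simps\<close>)
qed

lemma Dini_upper_Max_le:
  fixes f :: "'i \<Rightarrow> real \<Rightarrow> real"
  assumes fin: "finite I" and ne: "I \<noteq> {}"
    and lim: "\<And>i. i \<in> I \<Longrightarrow> ((\<lambda>\<tau>. (f i (t + \<tau>) - f i t) / \<tau>) \<longlongrightarrow> D i) (at_right 0)"
    and active: "\<And>i. i \<in> I \<Longrightarrow> f i t = Max ((\<lambda>i. f i t) ` I) \<Longrightarrow> D i \<le> B"
  shows "Dini_upper (\<lambda>\<tau>. Max ((\<lambda>i. f i \<tau>) ` I)) t \<le> ereal B"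
proof (rule ereal_le_epsilon2)
  fix e :: real assume "e > 0"
  with active have "\<forall>\<^sub>F \<tau> in at_right 0.
      (Max ((\<lambda>i. f i (t + \<tau>)) ` I) - Max ((\<lambda>i. f i t) ` I)) / \<tau> < B + e"
    by (intro eventually_Max_diff_quotient_less[OF fin ne lim]) force+
  then have "\<forall>\<^sub>F \<tau> in at_right 0.
      ereal ((Max ((\<lambda>i. f i (t + \<tau>)) ` I) - Max ((\<lambda>i. f i t) ` I)) / \<tau>) \<le> ereal (B + e)"
    by eventually_elim simp
  then show "Dini_upper (\<lambda>\<tau>. Max ((\<lambda>i. f i \<tau>) ` I)) t \<le> ereal B + ereal e"
    unfolding Dini_upper_def by (simp add: Limsup_bounded)
qed

lemma Min_image_eq_minus_Max:
  fixes f :: "'i \<Rightarrow> 'a::linordered_ab_group_add"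
  assumes "finite I" and "I \<noteq> {}"
  shows "Min (f ` I) = - Max ((\<lambda>i. - f i) ` I)"
proof -
  have "- Max ((\<lambda>i. - f i) ` I) = Min (uminus ` (\<lambda>i. - f i) ` I)"
    using assms by (intro minus_Max_eq_Min) auto
  also have "uminus ` (\<lambda>i. - f i) ` I = f ` I"
    by (simp add: image_image)
  finally show ?thesis by simp
qed

lemma Dini_upper_Min_ge:
  fixes f :: "'i \<Rightarrow> real \<Rightarrow> real"
  assumes fin: "finite I" and ne: "I \<noteq> {}"
    and lim: "\<And>i. i \<in> I \<Longrightarrow> ((\<lambda>\<tau>. (f i (t + \<tau>) - f i t) / \<tau>) \<longlongrightarrow> D i) (at_right 0)"
    and active: "\<And>i. i \<in> I \<Longrightarrow> f i t = Min ((\<lambda>i. f i t) ` I) \<Longrightarrow> D i \<ge> B"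
  shows "Dini_upper (\<lambda>\<tau>. Min ((\<lambda>i. f i \<tau>) ` I)) t \<ge> ereal B"
proof -
  have Min_eq: "Min ((\<lambda>i. f i \<tau>) ` I) = - Max ((\<lambda>i. - f i \<tau>) ` I)" for \<tau>
    using Min_image_eq_minus_Max[OF fin ne] .
  have below: "ereal (B - e) \<le> Dini_upper (\<lambda>\<tau>. Min ((\<lambda>i. f i \<tau>) ` I)) t" if "e > 0" for e
  proof -
    have lim': "((\<lambda>\<tau>. (- f i (t + \<tau>) - - f i t) / \<tau>) \<longlongrightarrow> - D i) (at_right 0)"
      if "i \<in> I" for i
      using tendsto_minus[OF lim[OF that]] by (simp only: minus_diff_minus minus_divide_left)
    have active': "- D i < e - B" if "i \<in> I" "- f i t = Max ((\<lambda>i. - f i t) ` I)" for i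
    proof -
      have "f i t = Min ((\<lambda>i. f i t) ` I)"
        using that(2) Min_eq[of t] by linarith
      with active[OF that(1)] \<open>e > 0\<close> show ?thesis by linarith
    qed
    have "\<forall>\<^sub>F \<tau> in at_right 0.
        (Max ((\<lambda>i. - f i (t + \<tau>)) ` I) - Max ((\<lambda>i. - f i t) ` I)) / \<tau> < e - B"
      by (rule eventually_Max_diff_quotient_less[OF fin ne lim' active'])
    then have "\<forall>\<^sub>F \<tau> in at_right 0.
        ereal (B - e) \<le> ereal ((Min ((\<lambda>i. f i (t + \<tau>)) ` I) - Min ((\<lambda>i. f i t) ` I)) / \<tau>)"
    proof eventually_elim
      case (elim \<tau>)
      have "(Min ((\<lambda>i. f i (t + \<tau>)) ` I) - Min ((\<lambda>i. f i t) ` I)) / \<tau>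
          = - ((Max ((\<lambda>i. - f i (t + \<tau>)) ` I) - Max ((\<lambda>i. - f i t) ` I)) / \<tau>)"
        unfolding Min_eq[of "t + \<tau>"] Min_eq[of t] by (simp add: diff_divide_distrib)
      with elim show ?case by simp
    qed
    then show ?thesis
      unfolding Dini_upper_def by (intro le_Limsup) (simp_all add: trivial_limit_at_right_real)
  qed
  show ?thesis
  proof (rule ereal_le_epsilon2)
    fix e :: real assume "e > 0"
    then have "ereal (B - e) + ereal e \<le> Dini_upper (\<lambda>\<tau>. Min ((\<lambda>i. f i \<tau>) ` I)) t + ereal e"
      using below by (intro add_right_mono) auto
    then show "ereal B \<le> Dini_upper (\<lambda>\<tau>. Min ((\<lambda>i. f i \<tau>) ` I)) t + ereal e"
      by simp
  qed
qed

text \<open>One coordinate of the transformed system frozen at a time: \<open>x\<close> holds the 2n coordinates,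
  \<open>D\<close> their right derivatives, \<open>v j\<close> the velocity \<open>q\<^sub>j'\<close> and \<open>d j\<close> the disturbance \<open>\<delta>\<^sub>j\<close>.\<close>
definition transformed_dynamics ::
  "real \<Rightarrow> nat \<Rightarrow> (nat \<Rightarrow> nat set) \<Rightarrow> (nat \<Rightarrow> nat \<Rightarrow> real)
     \<Rightarrow> (nat \<Rightarrow> real) \<Rightarrow> (nat \<Rightarrow> real) \<Rightarrow> (nat \<Rightarrow> real) \<Rightarrow> (nat \<Rightarrow> real) \<Rightarrow> bool" where
  "transformed_dynamics k n Nb w x v d D \<longleftrightarrow>
     (\<forall>j\<in>{1..n}. Nb j \<subseteq> {1..n} \<and> (\<forall>l\<in>Nb j. 0 < w j l)
        \<and> x (n + j) = x j + 2 / k * v j \<and> D j = v j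
        \<and> D (n + j) = d j - v j - 2 / k * (\<Sum>l\<in>Nb j. w j l * (x (n + j) - x (n + l))))"

lemma transformed_dynamics_uminus:
  assumes "transformed_dynamics k n Nb w x v d D"
  shows "transformed_dynamics k n Nb w (\<lambda>i. - x i) (\<lambda>j. - v j) (\<lambda>j. - d j) (\<lambda>i. - D i)"
  unfolding transformed_dynamics_def
proof (intro ballI conjI)
  fix j assume j: "j \<in> {1..n}"
  then show "Nb j \<subseteq> {1..n}" and "\<And>l. l \<in> Nb j \<Longrightarrow> 0 < w j l"
    and "- x (n + j) = - x j + 2 / k * - v j" and "- D j = - v j"
    using assms by (auto simp: transformed_dynamics_def)
  have "(\<Sum>l\<in>Nb j. w j l * (- x (n + j) - - x (n + l)))
      = - (\<Sum>l\<in>Nb j. w j l * (x (n + j) - x (n + l)))"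
    by (simp add: sum_negf[symmetric] algebra_simps)
  moreover have "D (n + j) = d j - v j - 2 / k * (\<Sum>l\<in>Nb j. w j l * (x (n + j) - x (n + l)))"
    using assms j by (simp add: transformed_dynamics_def)
  ultimately show "- D (n + j) = - d j - - v j
      - 2 / k * (\<Sum>l\<in>Nb j. w j l * (- x (n + j) - - x (n + l)))"
    by simp
qed

lemma rate_at_maximum_le:
  assumes k: "k > 0"
    and dyn: "transformed_dynamics k n Nb w x v d D"
    and d: "\<And>j. j \<in> {1..n} \<Longrightarrow> \<bar>d j\<bar> \<le> B"
    and i: "i \<in> {1..2 * n}"
    and max: "x i = Max (x ` {1..2 * n})"
  shows "D i \<le> B"
proof -
  have le_x_i: "x m \<le> x i" if "m \<in> {1..2 * n}" for m
    unfolding max using that by simp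
  show ?thesis
  proof (cases "i \<le> n")
    case True
    then have i: "i \<in> {1..n}" using i by simp
    have "x (n + i) \<le> x i" using le_x_i i by simp
    then have "v i \<le> 0" and "D i = v i"
      using dyn i k by (auto simp: transformed_dynamics_def divide_le_0_iff)
    moreover have "0 \<le> B" using d[OF i] by linarith
    ultimately show ?thesis by simp
  next
    case False
    define j where "j = i - n"
    have j: "j \<in> {1..n}" and ij: "i = n + j" using i False by (auto simp: j_def)
    have Nb: "Nb j \<subseteq> {1..n}" and w: "\<And>l. l \<in> Nb j \<Longrightarrow> 0 < w j l"
      and x_upper: "x (n + j) = x j + 2 / k * v j"
      and D_upper: "D (n + j) = d j - v j - 2 / k * (\<Sum>l\<in>Nb j. w j l * (x (n + j) - x (n + l)))"
      using dyn j by (auto simp: transformed_dynamics_def)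
    have "x j \<le> x (n + j)" using le_x_i j ij by simp
    then have "0 \<le> v j" using x_upper k by (simp add: zero_le_divide_iff)
    moreover have "0 \<le> (\<Sum>l\<in>Nb j. w j l * (x (n + j) - x (n + l)))"
    proof (rule sum_nonneg)
      fix l assume l: "l \<in> Nb j"
      then have "x (n + l) \<le> x (n + j)" using le_x_i Nb ij by auto
      with w[OF l] show "0 \<le> w j l * (x (n + j) - x (n + l))" by simp
    qed
    ultimately show ?thesis
      using D_upper d[OF j] k ij by (smt (verit) divide_pos_pos mult_nonneg_nonneg)
  qed
qed

lemma rate_at_minimum_ge:
  assumes k: "k > 0"
    and dyn: "transformed_dynamics k n Nb w x v d D"
    and d: "\<And>j. j \<in> {1..n} \<Longrightarrow> \<bar>d j\<bar> \<le> B"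
    and i: "i \<in> {1..2 * n}"
    and min: "x i = Min (x ` {1..2 * n})"
  shows "- B \<le> D i"
proof -
  have "Min (x ` {1..2 * n}) = - Max ((\<lambda>i. - x i) ` {1..2 * n})"
    using i by (intro Min_image_eq_minus_Max) auto
  then have "- x i = Max ((\<lambda>i. - x i) ` {1..2 * n})"
    using min by linarith
  with rate_at_maximum_le[OF k transformed_dynamics_uminus[OF dyn]] d i
  have "- D i \<le> B" by simp
  then show ?thesis by simp
qed

lemma has_vector_derivative_component_diff_quotient:
  fixes g :: "real \<Rightarrow> real^'m"
  assumes "(g has_vector_derivative G) (at t within {t..})"
  shows "((\<lambda>\<tau>. (g (t + \<tau>) $ s - g t $ s) / \<tau>) \<longlongrightarrow> G $ s) (at_right 0)"
proof -
  have "((\<lambda>x. g x $ s) has_real_derivative G $ s) (at t within {t..})"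
    using bounded_linear.has_vector_derivative[OF bounded_linear_vec_nth assms]
    by (simp add: has_real_derivative_iff_has_vector_derivative)
  then have "((\<lambda>y. (g y $ s - g t $ s) / (y - t)) \<longlongrightarrow> G $ s) (at_right t)"
    unfolding has_field_derivative_iff at_within_Ici_at_right .
  then show ?thesis
    unfolding filterlim_at_right_to_0[of _ _ t] by (simp add: add.commute)
qed

lemma xvar_has_vector_derivative:
  assumes q: "\<And>j. j \<in> {1..n} \<Longrightarrow> (q j has_vector_derivative q' j t) (at t within S)"
    and q': "\<And>j. j \<in> {1..n} \<Longrightarrow> (q' j has_vector_derivative q'' j t) (at t within S)"
    and i: "i \<in> {1..2 * n}"
  shows "((\<lambda>\<tau>. xvar k n q q' i \<tau>) has_vector_derivative xvar k n q' q'' i t) (at t within S)"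
proof (cases "i \<le> n")
  case True
  then show ?thesis using q i by (simp add: xvar_def)
next
  case False
  define j where "j = i - n"
  have j: "j \<in> {1..n}" using False i by (auto simp: j_def)
  have "((\<lambda>\<tau>. q j \<tau> + (2 / k) *\<^sub>R q' j \<tau>) has_vector_derivative q' j t + (2 / k) *\<^sub>R q'' j t)
      (at t within S)"
    by (intro has_vector_derivative_add q[OF j]
        bounded_linear.has_vector_derivative[OF bounded_linear_scaleR_right q'[OF j]])
  with False show ?thesis by (simp add: xvar_def j_def)
qed

lemma xvar_upper_rate:
  fixes q q' q'' :: "nat \<Rightarrow> real \<Rightarrow> real^'m"
  assumes k: "k \<noteq> 0" and j: "j \<in> {1..n}" and Nsub: "N (\<sigma> t) j \<subseteq> {1..n}"
    and dyn: "q'' j t = - k *\<^sub>R q' j t - (\<Sum>l\<in>N (\<sigma> t) j. a j l t *\<^sub>R (q j t - q l t))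
                        - (q j t - closest_point (X j) (q j t))"
  shows "xvar k n q' q'' (n + j) t = delta k \<sigma> N a X q q' j t - q' j t
           - (2 / k) *\<^sub>R (\<Sum>l\<in>N (\<sigma> t) j.
                a j l t *\<^sub>R (xvar k n q q' (n + j) t - xvar k n q q' (n + l) t))"
proof -
  define S1 where "S1 = (\<Sum>l\<in>N (\<sigma> t) j. a j l t *\<^sub>R (q j t - q l t))"
  define S2 where "S2 = (\<Sum>l\<in>N (\<sigma> t) j. a j l t *\<^sub>R (q' j t - q' l t))"
  define r where "r = q j t - closest_point (X j) (q j t)"
  have "(\<Sum>l\<in>N (\<sigma> t) j. a j l t *\<^sub>R (xvar k n q q' (n + j) t - xvar k n q q' (n + l) t))
      = (\<Sum>l\<in>N (\<sigma> t) j. a j l t *\<^sub>R (q j t - q l t) + (2 / k) *\<^sub>R (a j l t *\<^sub>R (q' j t - q' l t)))"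
    using j Nsub by (intro sum.cong) (auto simp: xvar_def algebra_simps)
  also have "\<dots> = S1 + (2 / k) *\<^sub>R S2"
    by (simp add: S1_def S2_def sum.distrib scaleR_sum_right)
  finally have sum_eq: "(\<Sum>l\<in>N (\<sigma> t) j.
      a j l t *\<^sub>R (xvar k n q q' (n + j) t - xvar k n q q' (n + l) t)) = S1 + (2 / k) *\<^sub>R S2" .
  have "xvar k n q' q'' (n + j) t = q' j t + (2 / k) *\<^sub>R (- k *\<^sub>R q' j t - S1 - r)"
    using j dyn by (simp add: xvar_def S1_def r_def)
  also have "\<dots> = - q' j t - (2 / k) *\<^sub>R S1 - (2 / k) *\<^sub>R r"
    using k by (simp add: scaleR_right_diff_distrib scaleR_2 algebra_simps)
  also have "\<dots> = ((4 / k\<^sup>2) *\<^sub>R S2 - (2 / k) *\<^sub>R r) - q' j t - (2 / k) *\<^sub>R (S1 + (2 / k) *\<^sub>R S2)"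
    by (simp add: algebra_simps power2_eq_square)
  finally show ?thesis
    unfolding sum_eq by (simp add: delta_def S2_def r_def)
qed

lemma xvar_transformed_dynamics:
  fixes q q' q'' :: "nat \<Rightarrow> real \<Rightarrow> real^'m"
  assumes k: "k \<noteq> 0"
    and Nsub: "\<And>j. j \<in> {1..n} \<Longrightarrow> N (\<sigma> t) j \<subseteq> {1..n}"
    and a_pos: "\<And>j l. j \<in> {1..n} \<Longrightarrow> l \<in> N (\<sigma> t) j \<Longrightarrow> 0 < a j l t"
    and dyn: "\<And>j. j \<in> {1..n} \<Longrightarrow>
      q'' j t = - k *\<^sub>R q' j t - (\<Sum>l\<in>N (\<sigma> t) j. a j l t *\<^sub>R (q j t - q l t))
                - (q j t - closest_point (X j) (q j t))"
  shows "transformed_dynamics k n (\<lambda>j. N (\<sigma> t) j) (\<lambda>j l. a j l t)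
           (\<lambda>i. xvar k n q q' i t $ s) (\<lambda>j. q' j t $ s)
           (\<lambda>j. delta k \<sigma> N a X q q' j t $ s) (\<lambda>i. xvar k n q' q'' i t $ s)"
  unfolding transformed_dynamics_def
proof (intro ballI conjI)
  fix j assume j: "j \<in> {1..n}"
  show "N (\<sigma> t) j \<subseteq> {1..n}" and "\<And>l. l \<in> N (\<sigma> t) j \<Longrightarrow> 0 < a j l t"
    using Nsub a_pos j by auto
  show "xvar k n q q' (n + j) t $ s = xvar k n q q' j t $ s + 2 / k * q' j t $ s"
    and "xvar k n q' q'' j t $ s = q' j t $ s"
    using j by (auto simp: xvar_def)
  show "xvar k n q' q'' (n + j) t $ s = delta k \<sigma> N a X q q' j t $ s - q' j t $ s
      - 2 / k * (\<Sum>l\<in>N (\<sigma> t) j. a j l t * (xvar k n q q' (n + j) t $ s - xvar k n q q' (n + l) t $ s))"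
    using xvar_upper_rate[where \<sigma> = \<sigma> and N = N and t = t and a = a and q = q and q' = q'
        and q'' = q'' and X = X, OF k j Nsub[OF j] dyn[OF j]]
    by (simp add: sum_component)
qed

theorem lemma2:
  fixes k :: real and n :: nat and t0 :: real and s :: "'m::finite"
    and q q' q'' :: "nat \<Rightarrow> real \<Rightarrow> real^'m"
    and \<sigma> :: "real \<Rightarrow> 'g" and N :: "'g \<Rightarrow> nat \<Rightarrow> nat set"
    and a :: "nat \<Rightarrow> nat \<Rightarrow> real \<Rightarrow> real"
    and X :: "nat \<Rightarrow> (real^'m) set"
  assumes k_pos: "k > 0"
    and n_pos: "n \<ge> 1"
    and t0_nonneg: "t0 \<ge> 0"
    and X_cc: "\<And>i. i \<in> {1..n} \<Longrightarrow> closed (X i) \<and> convex (X i) \<and> X i \<noteq> {}"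
    and sigma_pc: "piecewise_constant \<sigma>"
    and graphs: "\<And>g. undirected_nbrs n (N g)"
    and a_cont: "\<And>i j. i \<in> {1..n} \<Longrightarrow> j \<in> {1..n} \<Longrightarrow> continuous_on UNIV (a i j)"
    and a_pos: "\<And>i j t. i \<in> {1..n} \<Longrightarrow> j \<in> N (\<sigma> t) i \<Longrightarrow> a i j t > 0"
    and q_deriv: "\<And>i t. i \<in> {1..n} \<Longrightarrow> t \<ge> t0 \<Longrightarrow>
         (q i has_vector_derivative q' i t) (at t within {t0..})"
    and q'_deriv: "\<And>i t. i \<in> {1..n} \<Longrightarrow> t \<ge> t0 \<Longrightarrow>
         (q' i has_vector_derivative q'' i t) (at t within {t..})"
    and dyn: "\<And>i t. i \<in> {1..n} \<Longrightarrow> t \<ge> t0 \<Longrightarrow>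
         q'' i t = - k *\<^sub>R q' i t
                   - (\<Sum>j\<in>N (\<sigma> t) i. a i j t *\<^sub>R (q i t - q j t))
                   - (q i t - closest_point (X i) (q i t))"
  shows "\<forall>t \<ge> t0.
     Dini_upper (\<lambda>\<tau>. Max ((\<lambda>i. xvar k n q q' i \<tau> $ s) ` {1..2*n})) t
        \<le> ereal (Max ((\<lambda>i. norm (delta k \<sigma> N a X q q' i t)) ` {1..n}))
     \<and> Dini_upper (\<lambda>\<tau>. Min ((\<lambda>i. xvar k n q q' i \<tau> $ s) ` {1..2*n})) t
        \<ge> - ereal (Max ((\<lambda>i. norm (delta k \<sigma> N a X q q' i t)) ` {1..n}))"
proof (intro allI impI)
  fix t assume t: "t \<ge> t0"
  define B where "B = Max ((\<lambda>i. norm (delta k \<sigma> N a X q q' i t)) ` {1..n})"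
  define f where "f = (\<lambda>i \<tau>. xvar k n q q' i \<tau> $ s)"
  define D where "D = (\<lambda>i. xvar k n q' q'' i t $ s)"
  have I: "finite {1..2 * n}" "{1..2 * n} \<noteq> {}"
    using n_pos by auto
  have lim: "((\<lambda>\<tau>. (f i (t + \<tau>) - f i t) / \<tau>) \<longlongrightarrow> D i) (at_right 0)"
    if "i \<in> {1..2 * n}" for i
    unfolding f_def D_def
    by (intro has_vector_derivative_component_diff_quotient xvar_has_vector_derivative that
        has_vector_derivative_within_subset[OF q_deriv] q'_deriv) (use t in auto)
  have Nsub: "N (\<sigma> t) j \<subseteq> {1..n}" if "j \<in> {1..n}" for j
    using graphs[of "\<sigma> t"] that unfolding undirected_nbrs_def by auto
  have dyn_t: "transformed_dynamics k n (\<lambda>j. N (\<sigma> t) j) (\<lambda>j l. a j l t) (\<lambda>i. f i t)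
      (\<lambda>j. q' j t $ s) (\<lambda>j. delta k \<sigma> N a X q q' j t $ s) D"
    unfolding f_def D_def using k_pos
    by (intro xvar_transformed_dynamics Nsub a_pos dyn t) auto
  have delta_B: "\<bar>delta k \<sigma> N a X q q' j t $ s\<bar> \<le> B" if "j \<in> {1..n}" for j
    using component_le_norm_cart[of "delta k \<sigma> N a X q q' j t" s] that
    unfolding B_def by (meson Max_ge finite_atLeastAtMost finite_imageI imageI order_trans)
  have "Dini_upper (\<lambda>\<tau>. Max ((\<lambda>i. f i \<tau>) ` {1..2 * n})) t \<le> ereal B"
    by (rule Dini_upper_Max_le[OF I lim rate_at_maximum_le[OF k_pos dyn_t delta_B]])
  moreover have "Dini_upper (\<lambda>\<tau>. Min ((\<lambda>i. f i \<tau>) ` {1..2 * n})) t \<ge> ereal (- B)"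
    by (rule Dini_upper_Min_ge[OF I lim rate_at_minimum_ge[OF k_pos dyn_t delta_B]])
  ultimately show "Dini_upper (\<lambda>\<tau>. Max ((\<lambda>i. xvar k n q q' i \<tau> $ s) ` {1..2 * n})) t \<le> ereal B
     \<and> Dini_upper (\<lambda>\<tau>. Min ((\<lambda>i. xvar k n q q' i \<tau> $ s) ` {1..2 * n})) t \<ge> - ereal B"
    by (simp add: f_def)
qed

end
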